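(* Let $G\subseteq U(2)$ be a finite unitary reflection group and let $\mathcal R_G=\mathcal S_1\cup\mathcal S_2$ be a partition of its set of reflecting hyperplanes into two disjoint $G$-invariant subsets. Let $E\subseteq\mathbb C^2$ be a bounded $G$-invariant domain containing the origin. For $\delta>0$ and $j=1,2$ define $$E(\mathcal S_j,\delta)=\{(z,w)\in E\times E: d(z,Y)\geq\delta,\ d(w,Y)\geq\delta\ \ \forall Y\in\mathcal R_G\setminus\mathcal S_j\},$$ $$E_{\mathrm{reg}}(\delta)=\{(z,w)\in E\times E: d(z,bE)+d(w,bE)+|g.z-w|\geq\delta\ \ \forall g\in G\},$$ where $d$ denotes Euclidean distance. Then there exists $\delta>0$ such that $$E\times E=E(\mathcal S_1,\delta)\cup E(\mathcal S_2,\delta)\cup E_{\mathrm{reg}}(\delta).$$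
   Context: A reflection is an element of $U(2)$ of finite order whose fixed point set is a complex line (its reflecting hyperplane); a finite unitary reflection group $G$ is a finite subgroup of $U(2)$ generated by reflections, $\mathcal R_G$ is the set of reflecting hyperplanes of its reflections, and $G$ acts on $\mathcal R_G$ by $g.Y=\{g.v: v\in Y\}$. *)

theory Defs
  imports "HOL-Analysis.Analysis"
begin

text \<open>Vectors of C^2 are complex^2 (Euclidean norm), elements of U(2) are 2x2 complex
  matrices complex^2^2 acting by matrix-vector multiplication.\<close>

type_synonym cvec = "complex ^ 2"
type_synonym cmat = "complex ^ 2 ^ 2"

definition cmat_adj :: "cmat \<Rightarrow> cmat" where
  "cmat_adj A = (\<chi> i j. cnj (A $ j $ i))"

definition unitary2 :: "cmat \<Rightarrow> bool" where
  "unitary2 A \<longleftrightarrow> A ** cmat_adj A = mat 1 \<and> cmat_adj A ** A = mat 1"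

definition mat_pow :: "cmat \<Rightarrow> nat \<Rightarrow> cmat" where
  "mat_pow A n = ((\<lambda>B. A ** B) ^^ n) (mat 1)"

definition finite_order :: "cmat \<Rightarrow> bool" where
  "finite_order A \<longleftrightarrow> (\<exists>n>0. mat_pow A n = mat 1)"

definition fixset :: "cmat \<Rightarrow> cvec set" where
  "fixset A = {v. A *v v = v}"

definition complex_line :: "cvec set \<Rightarrow> bool" where
  "complex_line Y \<longleftrightarrow> (\<exists>u. u \<noteq> 0 \<and> Y = range (\<lambda>c::complex. c *s u))"

definition reflection :: "cmat \<Rightarrow> bool" where
  "reflection A \<longleftrightarrow> unitary2 A \<and> finite_order A \<and> complex_line (fixset A)"

inductive_set gen_group :: "cmat set \<Rightarrow> cmat set" for S where
  gen_one: "mat 1 \<in> gen_group S"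
| gen_base: "s \<in> S \<Longrightarrow> s \<in> gen_group S"
| gen_mult: "a \<in> gen_group S \<Longrightarrow> b \<in> gen_group S \<Longrightarrow> a ** b \<in> gen_group S"
| gen_inv: "a \<in> gen_group S \<Longrightarrow> matrix_inv a \<in> gen_group S"

definition finite_unitary_reflection_group :: "cmat set \<Rightarrow> bool" where
  "finite_unitary_reflection_group G \<longleftrightarrow>
     finite G \<and> (\<forall>g\<in>G. unitary2 g) \<and>
     mat 1 \<in> G \<and> (\<forall>g\<in>G. \<forall>h\<in>G. g ** h \<in> G) \<and> (\<forall>g\<in>G. matrix_inv g \<in> G) \<and>
     G = gen_group {g\<in>G. reflection g}"

definition act :: "cmat \<Rightarrow> cvec \<Rightarrow> cvec" where
  "act g v = g *v v"

definition reflecting_hyperplanes :: "cmat set \<Rightarrow> cvec set set" where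
  "reflecting_hyperplanes G = {fixset g | g. g \<in> G \<and> reflection g}"

definition G_invariant_family :: "cmat set \<Rightarrow> cvec set set \<Rightarrow> bool" where
  "G_invariant_family G S \<longleftrightarrow> (\<forall>g\<in>G. \<forall>Y\<in>S. act g ` Y \<in> S)"

definition G_invariant_set :: "cmat set \<Rightarrow> cvec set \<Rightarrow> bool" where
  "G_invariant_set G E \<longleftrightarrow> (\<forall>g\<in>G. \<forall>z\<in>E. act g z \<in> E)"

definition domain :: "cvec set \<Rightarrow> bool" where
  "domain E \<longleftrightarrow> open E \<and> connected E \<and> E \<noteq> {}"

definition E_S :: "cmat set \<Rightarrow> cvec set \<Rightarrow> cvec set set \<Rightarrow> real \<Rightarrow> (cvec \<times> cvec) set" where
  "E_S G E S \<delta> = {(z, w) \<in> E \<times> E. \<forall>Y \<in> reflecting_hyperplanes G - S.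
       infdist z Y \<ge> \<delta> \<and> infdist w Y \<ge> \<delta>}"

definition E_reg :: "cmat set \<Rightarrow> cvec set \<Rightarrow> real \<Rightarrow> (cvec \<times> cvec) set" where
  "E_reg G E \<delta> = {(z, w) \<in> E \<times> E. \<forall>g\<in>G.
       infdist z (frontier E) + infdist w (frontier E) + norm (act g z - w) \<ge> \<delta>}"

end

theory Submission
  imports Defs
begin

text \<open>Fix \<open>g \<in> G\<close>, \<open>Y1 \<in> S2\<close> and \<open>Y2 \<in> S1\<close>. A pair \<open>(z, w)\<close> violates all three
  conditions, as witnessed by \<open>g\<close>, \<open>Y1\<close>, \<open>Y2\<close>, exactly when the continuous function
  \<open>cover_gap\<close> below is smaller than \<open>\<delta>\<close>. It has no zero on the compact set
  \<open>closure E \<times> closure E\<close>: a zero gives \<open>z \<in> bE\<close>, so \<open>z \<noteq> 0\<close>, with \<open>w = g.z\<close> and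
  each of \<open>Y1\<close>, \<open>Y2\<close> containing \<open>z\<close> or \<open>g.z\<close>. By \<open>G\<close>-invariance of \<open>S1\<close> and
  \<open>S2\<close>, \<open>z\<close> then lies on a line of \<open>S1\<close> and on a different line of \<open>S2\<close>, but distinct
  complex lines meet only in \<open>0\<close>. So each such function has a positive minimum, and \<open>\<delta>\<close>
  is the least of these finitely many minima.\<close>

lemma closed_complex_line:
  assumes "complex_line Y" shows "closed Y"
proof -
  obtain u where "u \<noteq> 0" and Y: "Y = range (\<lambda>c::complex. c *s u)"
    using assms unfolding complex_line_def by blast
  have "linear (\<lambda>c::complex. c *s u)"
    by (auto simp: linear_iff vec_eq_iff algebra_simps scaleR_conv_of_real[where 'a=complex])
  moreover have "inj (\<lambda>c::complex. c *s u)"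
    using \<open>u \<noteq> 0\<close> by (auto simp: inj_def vec_eq_iff)
  ultimately show ?thesis
    unfolding Y by (intro closed_injective_linear_image) auto
qed

lemma complex_line_nonempty: "complex_line Y \<Longrightarrow> Y \<noteq> {}"
  unfolding complex_line_def by blast

lemma complex_line_eq_range_member:
  assumes "complex_line Y" "z \<in> Y" "z \<noteq> 0"
  shows "Y = range (\<lambda>c::complex. c *s z)"
proof -
  obtain u where Y: "Y = range (\<lambda>c::complex. c *s u)"
    using assms(1) unfolding complex_line_def by blast
  then obtain a where z: "z = a *s u"
    using assms(2) by blast
  with assms(3) have "a \<noteq> 0" by auto
  have u_in: "c *s u = (c / a) *s z" and z_in: "c *s z = (c * a) *s u" for c
    using \<open>a \<noteq> 0\<close> by (simp_all add: z vector_smult_assoc)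
  show ?thesis
    unfolding Y
  proof (intro equalityI image_subsetI)
    show "c *s u \<in> range (\<lambda>c. c *s z)" for c
      by (subst u_in) (rule rangeI)
    show "c *s z \<in> range (\<lambda>c. c *s u)" for c
      by (subst z_in) (rule rangeI)
  qed
qed

lemma complex_lines_eq_if_common_nonzero:
  assumes "complex_line Y1" "complex_line Y2" "z \<in> Y1" "z \<in> Y2" "z \<noteq> 0"
  shows "Y1 = Y2"
  using complex_line_eq_range_member assms by metis

lemma unitary2_imp_invertible: "unitary2 g \<Longrightarrow> invertible g"
  unfolding unitary2_def invertible_def by blast

lemma matrix_inv_mult_cancel:
  assumes "invertible g" shows "matrix_inv g *v (g *v z) = z"
proof -
  have "g ** matrix_inv g = mat 1 \<and> matrix_inv g ** g = mat 1"
    using assms unfolding invertible_def matrix_inv_def by (rule someI_ex)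
  then show ?thesis
    by (metis matrix_vector_mul_assoc matrix_vector_mul_lid)
qed

lemma continuous_on_act [continuous_intros]:
  "continuous_on A f \<Longrightarrow> continuous_on A (\<lambda>x. act g (f x))"
  unfolding act_def by (rule continuous_on_compose2[OF matrix_vector_mult_linear_continuous_on]) auto

lemma complex_line_reflecting_hyperplane:
  "Y \<in> reflecting_hyperplanes G \<Longrightarrow> complex_line Y"
  unfolding reflecting_hyperplanes_def reflection_def by blast

lemma finite_reflecting_hyperplanes:
  assumes "finite G" shows "finite (reflecting_hyperplanes G)"
proof -
  have "reflecting_hyperplanes G = fixset ` {g \<in> G. reflection g}"
    unfolding reflecting_hyperplanes_def by blast
  then show ?thesis
    using assms by simp
qed

lemma G_invariant_family_act_preimage:
  assumes "G_invariant_family G S" "matrix_inv g \<in> G" "invertible g"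
    and "Y \<in> S" "act g z \<in> Y"
  shows "\<exists>Y'\<in>S. z \<in> Y'"
proof
  show "act (matrix_inv g) ` Y \<in> S"
    using assms(1,2,4) unfolding G_invariant_family_def by blast
  have "act (matrix_inv g) (act g z) = z"
    using assms(3) unfolding act_def by (rule matrix_inv_mult_cancel)
  then show "z \<in> act (matrix_inv g) ` Y"
    using assms(5) by (metis imageI)
qed

lemma invariant_partition_orbit_meets_both_parts_imp_zero:
  assumes G: "finite_unitary_reflection_group G"
    and R: "reflecting_hyperplanes G = S1 \<union> S2" "S1 \<inter> S2 = {}"
    and inv: "G_invariant_family G S1" "G_invariant_family G S2"
    and "g \<in> G" "Y1 \<in> S1" "Y2 \<in> S2"
    and "z \<in> Y1 \<or> act g z \<in> Y1" "z \<in> Y2 \<or> act g z \<in> Y2"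
  shows "z = 0"
proof (rule ccontr)
  assume "z \<noteq> 0"
  have "matrix_inv g \<in> G" "invertible g"
    using G \<open>g \<in> G\<close> unitary2_imp_invertible
    unfolding finite_unitary_reflection_group_def by auto
  then obtain A B where "A \<in> S1" "z \<in> A" "B \<in> S2" "z \<in> B"
    using G_invariant_family_act_preimage[OF inv(1)] G_invariant_family_act_preimage[OF inv(2)]
      assms(7-10) by metis
  moreover have "complex_line A" "complex_line B"
    using \<open>A \<in> S1\<close> \<open>B \<in> S2\<close> R(1) complex_line_reflecting_hyperplane by auto
  ultimately show False
    using complex_lines_eq_if_common_nonzero \<open>z \<noteq> 0\<close> R(2) by blast
qed

definition cover_gap :: "cvec set \<Rightarrow> cmat \<Rightarrow> cvec set \<Rightarrow> cvec set \<Rightarrow> cvec \<times> cvec \<Rightarrow> real" where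
  "cover_gap F g Y1 Y2 p =
     max (infdist (fst p) F + infdist (snd p) F + norm (act g (fst p) - snd p))
       (max (min (infdist (fst p) Y1) (infdist (snd p) Y1))
            (min (infdist (fst p) Y2) (infdist (snd p) Y2)))"

lemma continuous_on_cover_gap: "continuous_on A (cover_gap F g Y1 Y2)"
  unfolding cover_gap_def by (intro continuous_intros)

lemma cover_gap_nonpos_imp:
  assumes "cover_gap F g Y1 Y2 (z, w) \<le> 0"
    and "closed F" "F \<noteq> {}" "closed Y1" "Y1 \<noteq> {}" "closed Y2" "Y2 \<noteq> {}"
  shows "z \<in> F" "w = act g z" "z \<in> Y1 \<or> w \<in> Y1" "z \<in> Y2 \<or> w \<in> Y2"
proof -
  have "infdist z F + infdist w F + norm (act g z - w) \<le> 0"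
    "min (infdist z Y1) (infdist w Y1) \<le> 0" "min (infdist z Y2) (infdist w Y2) \<le> 0"
    using assms(1) unfolding cover_gap_def by auto
  then have "infdist z F = 0" "norm (act g z - w) = 0"
    "infdist z Y1 = 0 \<or> infdist w Y1 = 0" "infdist z Y2 = 0 \<or> infdist w Y2 = 0"
    using infdist_nonneg[of z F] infdist_nonneg[of w F] norm_ge_zero[of "act g z - w"]
      infdist_nonneg[of z Y1] infdist_nonneg[of w Y1] infdist_nonneg[of z Y2] infdist_nonneg[of w Y2]
    by linarith+
  then show "z \<in> F" "w = act g z" "z \<in> Y1 \<or> w \<in> Y1" "z \<in> Y2 \<or> w \<in> Y2"
    using assms(2-7) in_closed_iff_infdist_zero by auto
qed

lemma not_in_cover_imp_small_cover_gap:
  assumes "(z, w) \<in> E \<times> E" "(z, w) \<notin> E_S G E S1 \<delta> \<union> E_S G E S2 \<delta> \<union> E_reg G E \<delta>"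
  shows "\<exists>g\<in>G. \<exists>Y1\<in>reflecting_hyperplanes G - S1. \<exists>Y2\<in>reflecting_hyperplanes G - S2.
           cover_gap (frontier E) g Y1 Y2 (z, w) < \<delta>"
  using assms unfolding E_S_def E_reg_def cover_gap_def by (auto simp: not_le min_less_iff_disj)

lemma compact_pos_imp_uniform_lower_bound:
  fixes f :: "'a::topological_space \<Rightarrow> real"
  assumes "compact K" "continuous_on K f" "\<forall>p\<in>K. 0 < f p"
  shows "\<exists>d>0. \<forall>p\<in>K. d \<le> f p"
proof (cases "K = {}")
  case False
  then obtain p0 where "p0 \<in> K" "\<forall>p\<in>K. f p0 \<le> f p"
    using continuous_attains_inf assms(1,2) by blast
  then show ?thesis
    using assms(3) by blast
qed (auto intro: exI[of _ 1])

lemma finite_compact_pos_imp_uniform_lower_bound: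
  fixes f :: "'b \<Rightarrow> 'a::topological_space \<Rightarrow> real"
  assumes "finite T" "compact K" "\<forall>t\<in>T. continuous_on K (f t)" "\<forall>t\<in>T. \<forall>p\<in>K. 0 < f t p"
  shows "\<exists>d>0. \<forall>t\<in>T. \<forall>p\<in>K. d \<le> f t p"
  using assms(1,3,4)
proof (induction T rule: finite_induct)
  case empty
  show ?case by (auto intro: exI[of _ 1])
next
  case (insert t T)
  then obtain d where "d > 0" "\<forall>s\<in>T. \<forall>p\<in>K. d \<le> f s p"
    by auto
  moreover obtain d' where "d' > 0" "\<forall>p\<in>K. d' \<le> f t p"
    using compact_pos_imp_uniform_lower_bound[OF assms(2), of "f t"] insert.prems by auto
  ultimately show ?case
    by (intro exI[of _ "min d d'"]) (auto simp: min_le_iff_disj)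
qed

lemma cover_gap_pos:
  assumes G: "finite_unitary_reflection_group G"
    and R: "reflecting_hyperplanes G = S1 \<union> S2" "S1 \<inter> S2 = {}"
    and inv: "G_invariant_family G S1" "G_invariant_family G S2"
    and E: "bounded E" "open E" "0 \<in> E"
    and "g \<in> G" "Y1 \<in> S2" "Y2 \<in> S1"
  shows "0 < cover_gap (frontier E) g Y1 Y2 p"
proof (rule ccontr)
  obtain z w where p: "p = (z, w)" by fastforce
  assume "\<not> 0 < cover_gap (frontier E) g Y1 Y2 p"
  moreover have "E \<noteq> UNIV"
    using E(1) not_bounded_UNIV by blast
  then have "frontier E \<noteq> {}"
    using E(3) frontier_eq_empty by blast
  moreover have "closed Y" "Y \<noteq> {}" if "Y \<in> reflecting_hyperplanes G" for Y
    using that closed_complex_line complex_line_nonempty complex_line_reflecting_hyperplane by auto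
  ultimately have "z \<in> frontier E" "z \<in> Y1 \<or> act g z \<in> Y1" "z \<in> Y2 \<or> act g z \<in> Y2"
    using cover_gap_nonpos_imp[of "frontier E" g Y1 Y2 z w] \<open>Y1 \<in> S2\<close> \<open>Y2 \<in> S1\<close> R(1)
    unfolding p by auto
  moreover have "0 \<notin> frontier E"
    using E(2,3) by (simp add: frontier_def interior_open)
  ultimately show False
    using invariant_partition_orbit_meets_both_parts_imp_zero[OF G _ _ inv(2,1) \<open>g \<in> G\<close>
        \<open>Y1 \<in> S2\<close> \<open>Y2 \<in> S1\<close>] R by auto
qed

theorem lemma6p1:
  fixes G :: "cmat set" and S1 S2 :: "cvec set set" and E :: "cvec set"
  assumes "finite_unitary_reflection_group G"
    and "reflecting_hyperplanes G = S1 \<union> S2" and "S1 \<inter> S2 = {}"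
    and "G_invariant_family G S1" and "G_invariant_family G S2"
    and "bounded E" and "domain E" and "0 \<in> E" and "G_invariant_set G E"
  shows "\<exists>\<delta>>0. E \<times> E = E_S G E S1 \<delta> \<union> E_S G E S2 \<delta> \<union> E_reg G E \<delta>"
proof -
  define T where "T = G \<times> S2 \<times> S1"
  define K where "K = closure E \<times> closure E"
  define gap where "gap t = cover_gap (frontier E) (fst t) (fst (snd t)) (snd (snd t))" for t
  have R_minus: "reflecting_hyperplanes G - S1 = S2" "reflecting_hyperplanes G - S2 = S1"
    using assms(2,3) by auto
  have "finite T"
    using assms(1,2) finite_reflecting_hyperplanes[of G]
    unfolding T_def finite_unitary_reflection_group_def by simp
  moreover have "compact K"
    using assms(6) unfolding K_def by (simp add: compact_Times compact_closure)
  moreover have "\<forall>t\<in>T. continuous_on K (gap t)"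
    unfolding gap_def by (simp add: continuous_on_cover_gap)
  moreover have "\<forall>t\<in>T. \<forall>p\<in>K. 0 < gap t p"
    using cover_gap_pos[OF assms(1-6) _ assms(8)] assms(7)
    unfolding T_def gap_def domain_def by auto
  ultimately obtain \<delta> where "\<delta> > 0" and \<delta>: "\<forall>t\<in>T. \<forall>p\<in>K. \<delta> \<le> gap t p"
    using finite_compact_pos_imp_uniform_lower_bound by blast
  have "(z, w) \<in> E_S G E S1 \<delta> \<union> E_S G E S2 \<delta> \<union> E_reg G E \<delta>" if zw: "(z, w) \<in> E \<times> E" for z w
  proof (rule ccontr)
    assume "(z, w) \<notin> E_S G E S1 \<delta> \<union> E_S G E S2 \<delta> \<union> E_reg G E \<delta>"
    with zw have "\<exists>g\<in>G. \<exists>Y1\<in>reflecting_hyperplanes G - S1. \<exists>Y2\<in>reflecting_hyperplanes G - S2.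
        cover_gap (frontier E) g Y1 Y2 (z, w) < \<delta>"
      by (rule not_in_cover_imp_small_cover_gap)
    then obtain g Y1 Y2 where "(g, Y1, Y2) \<in> T" "gap (g, Y1, Y2) (z, w) < \<delta>"
      unfolding R_minus T_def gap_def by auto
    moreover have "(z, w) \<in> K"
      using zw closure_subset unfolding K_def by blast
    ultimately show False
      using \<delta> by fastforce
  qed
  moreover have "E_S G E S1 \<delta> \<union> E_S G E S2 \<delta> \<union> E_reg G E \<delta> \<subseteq> E \<times> E"
    unfolding E_S_def E_reg_def by auto
  ultimately have "E \<times> E = E_S G E S1 \<delta> \<union> E_S G E S2 \<delta> \<union> E_reg G E \<delta>"
    by auto
  with \<open>\<delta> > 0\<close> show ?thesis
    by blast
qed

end
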